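(* Let $E\subset\mathbb{R}^2$ be a polygon with vertices $\mathbf{q}_1,\ldots,\mathbf{q}_n$, let $\gamma>0$ be a constant and $a^E(u,v)=\gamma\int_E\nabla u\cdot\nabla v\,\mathrm{d}\mathbf{x}$. Let $\mathcal{W}(E)$ be the space of functions $u:E\to\mathbb{R}$ that are affine on each edge of $E$ and satisfy $\Delta u=0$ in $E$. Let $\mathcal{W}_R(E)$ be the space of constant functions on $E$, $\mathcal{W}_C(E)=\{u \text{ affine on } E:\ \bar u=0\}$, and define, for $v\in\mathcal{W}(E)$, $\pi_Rv:=\bar v$ (a constant function), $\pi_Cv(\mathbf{x}):=\langle\nabla v\rangle\cdot(\mathbf{x}-\overline{\mathbf{q}})$ and $\pi_{\mathcal P}v:=\pi_Cv+\pi_Rv$. Then: (i) for all $r\in\mathcal{W}_R(E)$, $c\in\mathcal{W}_C(E)$ and $v\in\mathcal{W}(E)$, $a^E(r,v)=0$ and $a^E(c,v-\pi_Cv)=0$; (ii) for all $u,v\in\mathcal{W}(E)$, $a^E(u,v)=a^E(\pi_Cu,\pi_Cv)+a^E(u-\pi_{\mathcal P}u,\,v-\pi_{\mathcal P}v)$.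
   Context: For a continuous function $v$ on $E$, $\bar v=\frac1n\sum_{j=1}^n v(\mathbf{q}_j)$ is the average of its values at the vertices; $\overline{\mathbf{q}}=\frac1n\sum_j\mathbf{q}_j$; for an integrable (possibly vector-valued) function $w$, $\langle w\rangle=\frac{1}{|E|}\int_Ew\,\mathrm{d}\mathbf{x}$. *)

theory Defs
  imports "HOL-Analysis.Analysis"
begin

type_synonym pt = "real ^ 2"

definition pedge :: "(nat \<Rightarrow> pt) \<Rightarrow> nat \<Rightarrow> nat \<Rightarrow> pt set" where
  "pedge q n i = closed_segment (q i) (q (Suc i mod n))"

definition pboundary :: "(nat \<Rightarrow> pt) \<Rightarrow> nat \<Rightarrow> pt set" where
  "pboundary q n = (\<Union>i<n. pedge q n i)"

text \<open>Simple polygon: at least 3 distinct vertices, no three consecutive vertices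
  collinear (so each q i is a genuine vertex), and edges meet only at the
  common vertex of consecutive edges.\<close>
definition is_polygon :: "(nat \<Rightarrow> pt) \<Rightarrow> nat \<Rightarrow> bool" where
  "is_polygon q n \<longleftrightarrow> n \<ge> 3 \<and> inj_on q {..<n} \<and>
     (\<forall>i<n. \<not> collinear {q i, q (Suc i mod n), q (Suc (Suc i) mod n)}) \<and>
     (\<forall>i<n. \<forall>j<n. i \<noteq> j \<longrightarrow>
        pedge q n i \<inter> pedge q n j =
          (if j = Suc i mod n then {q j} else if i = Suc j mod n then {q i} else {}))"

definition pregion :: "(nat \<Rightarrow> pt) \<Rightarrow> nat \<Rightarrow> pt set" where
  "pregion q n = pboundary q n \<union> inside (pboundary q n)"

text \<open>Gradient of a scalar function at a point (meaningful where it is differentiable).\<close>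
definition grad :: "(pt \<Rightarrow> real) \<Rightarrow> pt \<Rightarrow> pt" where
  "grad u x = (SOME g. (u has_derivative (\<lambda>h. g \<bullet> h)) (at x))"

definition laplacian :: "(pt \<Rightarrow> real) \<Rightarrow> pt \<Rightarrow> real" where
  "laplacian u x = (\<Sum>i\<in>UNIV. grad (\<lambda>y. grad u y $ i) x $ i)"

definition vavg :: "(nat \<Rightarrow> pt) \<Rightarrow> nat \<Rightarrow> (pt \<Rightarrow> real) \<Rightarrow> real" where
  "vavg q n v = (\<Sum>j<n. v (q j)) / real n"

definition qbar :: "(nat \<Rightarrow> pt) \<Rightarrow> nat \<Rightarrow> pt" where
  "qbar q n = (1 / real n) *\<^sub>R (\<Sum>j<n. q j)"

definition ravg :: "pt set \<Rightarrow> (pt \<Rightarrow> 'b::euclidean_space) \<Rightarrow> 'b" where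
  "ravg E w = (1 / measure lebesgue E) *\<^sub>R integral E w"

definition aE :: "real \<Rightarrow> pt set \<Rightarrow> (pt \<Rightarrow> real) \<Rightarrow> (pt \<Rightarrow> real) \<Rightarrow> real" where
  "aE \<gamma> E u v = \<gamma> * integral E (\<lambda>x. grad u x \<bullet> grad v x)"

text \<open>The space W(E) (a subspace of H^1(E)): continuous on E, affine on every edge,
  harmonic in the interior, with square-integrable gradient.\<close>
definition Wspace :: "(nat \<Rightarrow> pt) \<Rightarrow> nat \<Rightarrow> (pt \<Rightarrow> real) \<Rightarrow> bool" where
  "Wspace q n u \<longleftrightarrow>
     continuous_on (pregion q n) u \<and>
     (\<forall>i<n. \<exists>a b. \<forall>x\<in>pedge q n i. u x = a \<bullet> x + b) \<and>
     (\<forall>x\<in>interior (pregion q n).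
        u differentiable (at x) \<and>
        (\<forall>i. (\<lambda>y. grad u y $ i) differentiable (at x)) \<and>
        laplacian u x = 0) \<and>
     (\<lambda>x. grad u x) absolutely_integrable_on pregion q n \<and>
     (\<lambda>x. (norm (grad u x))\<^sup>2) integrable_on pregion q n"

definition WRspace :: "(nat \<Rightarrow> pt) \<Rightarrow> nat \<Rightarrow> (pt \<Rightarrow> real) \<Rightarrow> bool" where
  "WRspace q n r \<longleftrightarrow> (\<exists>c. \<forall>x\<in>pregion q n. r x = c)"

definition WCspace :: "(nat \<Rightarrow> pt) \<Rightarrow> nat \<Rightarrow> (pt \<Rightarrow> real) \<Rightarrow> bool" where
  "WCspace q n c \<longleftrightarrow> (\<exists>a b. \<forall>x\<in>pregion q n. c x = a \<bullet> x + b) \<and> vavg q n c = 0"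

definition piR :: "(nat \<Rightarrow> pt) \<Rightarrow> nat \<Rightarrow> (pt \<Rightarrow> real) \<Rightarrow> pt \<Rightarrow> real" where
  "piR q n v = (\<lambda>x. vavg q n v)"

definition piC :: "(nat \<Rightarrow> pt) \<Rightarrow> nat \<Rightarrow> (pt \<Rightarrow> real) \<Rightarrow> pt \<Rightarrow> real" where
  "piC q n v = (\<lambda>x. ravg (pregion q n) (grad v) \<bullet> (x - qbar q n))"

definition piP :: "(nat \<Rightarrow> pt) \<Rightarrow> nat \<Rightarrow> (pt \<Rightarrow> real) \<Rightarrow> pt \<Rightarrow> real" where
  "piP q n v = (\<lambda>x. piC q n v x + piR q n v x)"

end

theory Submission
  imports Defs
begin

text \<open>The form \<open>a\<^sup>E\<close> only sees gradients, and the boundary of \<open>E\<close> is negligible, so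
  everything can be computed on the open region enclosed by the boundary. There
  \<open>\<nabla>r = 0\<close>, \<open>\<nabla>c\<close> is a constant vector, \<open>\<nabla>(\<pi>\<^sub>C v) = \<langle>\<nabla>v\<rangle>\<close> and
  \<open>\<nabla>(v - \<pi>\<^sub>C v) = \<nabla>(v - \<pi>\<^sub>\<P> v) = \<nabla>v - \<langle>\<nabla>v\<rangle>\<close>. Both claims then follow from
  \<open>\<integral>\<^sub>E (\<nabla>v - \<langle>\<nabla>v\<rangle>) = 0\<close>, in the form
  \<open>\<integral>\<^sub>E (f - \<langle>f\<rangle>)\<cdot>(g - \<langle>g\<rangle>) = \<integral>\<^sub>E f\<cdot>g - |E| \<langle>f\<rangle>\<cdot>\<langle>g\<rangle>\<close>.\<close>

lemma grad_eqI:
  assumes "(f has_derivative (\<lambda>h. g \<bullet> h)) (at x)"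
  shows "grad f x = g"
proof -
  have "(f has_derivative (\<lambda>h. grad f x \<bullet> h)) (at x)"
    unfolding grad_def using assms by (rule someI)
  then have "(\<lambda>h. grad f x \<bullet> h) = (\<lambda>h. g \<bullet> h)"
    using assms by (rule has_derivative_unique)
  then have "(grad f x - g) \<bullet> (grad f x - g) = 0"
    by (metis inner_diff_left right_minus_eq)
  then show ?thesis by simp
qed

lemma has_derivative_grad:
  assumes "f differentiable (at x)"
  shows "(f has_derivative (\<lambda>h. grad f x \<bullet> h)) (at x)"
proof -
  obtain D where D: "(f has_derivative D) (at x)"
    using assms differentiable_def by blast
  then have "linear D" by (rule has_derivative_linear)
  then have "D = (\<lambda>h. adjoint D 1 \<bullet> h)"
    by (metis adjoint_works inner_commute inner_real_def mult.right_neutral)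
  with D have "grad f x = adjoint D 1" by (simp add: grad_eqI)
  with D \<open>D = _\<close> show ?thesis by simp
qed

lemma grad_affine_on_open:
  assumes "open S" "x \<in> S" "\<And>y. y \<in> S \<Longrightarrow> f y = a \<bullet> y + b"
  shows "grad f x = a"
proof (rule grad_eqI)
  have "((\<lambda>y. a \<bullet> y + b) has_derivative (\<lambda>h. a \<bullet> h)) (at x)"
    by (auto intro!: derivative_eq_intros)
  then show "(f has_derivative (\<lambda>h. a \<bullet> h)) (at x)"
    by (rule has_derivative_transform_within_open[OF _ assms(1,2)]) (use assms(3) in auto)
qed

lemma grad_diff_affine:
  assumes "f differentiable (at x)"
  shows "grad (\<lambda>y. f y - (m \<bullet> (y - p) + c)) x = grad f x - m"
proof (rule grad_eqI)
  show "((\<lambda>y. f y - (m \<bullet> (y - p) + c)) has_derivative (\<lambda>h. (grad f x - m) \<bullet> h)) (at x)"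
    using has_derivative_grad[OF assms]
    by (auto intro!: derivative_eq_intros simp: inner_diff_left)
qed

lemma negligible_pboundary: "negligible (pboundary q n)"
  unfolding pboundary_def pedge_def
proof (intro negligible_Union finite_imageI finite_lessThan, clarify)
  fix i
  have "interior (closed_segment (q i) (q (Suc i mod n))) = {}"
    by (rule interior_closed_segment_ge2) simp
  then show "negligible (closed_segment (q i) (q (Suc i mod n)))"
    by (simp add: negligible_convex_interior)
qed

lemma compact_pboundary: "compact (pboundary q n)"
  unfolding pboundary_def pedge_def by (intro compact_UN) (auto simp: compact_segment)

lemma open_inside_pboundary: "open (inside (pboundary q n))"
  by (simp add: open_inside compact_imp_closed compact_pboundary)

lemma inside_pboundary_subset_interior: "inside (pboundary q n) \<subseteq> interior (pregion q n)"
  unfolding pregion_def by (simp add: interior_maximal open_inside_pboundary)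

lemma compact_pregion: "compact (pregion q n)"
proof -
  let ?B = "pboundary q n"
  have "closed ?B" "bounded ?B"
    using compact_pboundary by (auto simp: compact_imp_closed compact_imp_bounded)
  moreover have "closure (inside ?B) \<subseteq> ?B \<union> inside ?B"
    using closure_Un_frontier[of "inside ?B"] frontier_inside_subset[OF \<open>closed ?B\<close>] by auto
  ultimately have "closed (?B \<union> inside ?B)"
    by (simp add: closure_Un flip: closure_subset_eq)
  with \<open>bounded ?B\<close> show ?thesis
    unfolding pregion_def compact_eq_bounded_closed by (simp add: bounded_inside)
qed

lemma lmeasurable_pregion: "pregion q n \<in> lmeasurable"
  by (rule lmeasurable_compact[OF compact_pregion])

lemma integral_pregion_cong:
  assumes "\<And>x. x \<in> inside (pboundary q n) \<Longrightarrow> f x = g x"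
  shows "integral (pregion q n) f = integral (pregion q n) g"
  by (rule integral_spike[OF negligible_pboundary]) (use assms in \<open>auto simp: pregion_def\<close>)

lemma integral_eq_measure_scaleR_ravg:
  fixes f :: "pt \<Rightarrow> 'b::euclidean_space"
  assumes "S \<in> lmeasurable"
  shows "integral S f = measure lebesgue S *\<^sub>R ravg S f"
proof (cases "measure lebesgue S = 0")
  case True
  then have "negligible S" using negligible_iff_measure0[OF assms] by simp
  then have "integral S f = integral S (\<lambda>x. 0)"
    by (intro integral_spike[of S]) auto
  with True show ?thesis by simp
qed (simp add: ravg_def)

lemma integral_const_lmeasurable:
  assumes "S \<in> lmeasurable"
  shows "integral S (\<lambda>x. c) = c * measure lebesgue S"
  using integral_mult_right[of S c "\<lambda>x. 1"] lmeasure_integral[OF assms] by simp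

lemma integral_inner_left_const:
  fixes f :: "'a::euclidean_space \<Rightarrow> 'b::euclidean_space"
  assumes "f integrable_on S"
  shows "integral S (\<lambda>x. a \<bullet> f x) = a \<bullet> integral S f"
  using integral_linear[OF assms bounded_linear_inner_right[of a]] by (simp add: o_def)

lemma integrable_inner_left_const:
  fixes f :: "'a::euclidean_space \<Rightarrow> 'b::euclidean_space"
  assumes "f integrable_on S"
  shows "(\<lambda>x. a \<bullet> f x) integrable_on S"
  using integrable_linear[OF assms bounded_linear_inner_right[of a]] by (simp add: o_def)

lemma integral_inner_diff_ravg:
  fixes f :: "pt \<Rightarrow> 'b::euclidean_space"
  assumes "S \<in> lmeasurable" "f integrable_on S"
  shows "integral S (\<lambda>x. a \<bullet> (f x - ravg S f)) = 0"
proof -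
  have "integral S (\<lambda>x. a \<bullet> (f x - ravg S f))
      = integral S (\<lambda>x. a \<bullet> f x) - integral S (\<lambda>x. a \<bullet> ravg S f)"
    unfolding inner_diff_right
    by (intro integral_diff integrable_inner_left_const integrable_on_const assms)
  also have "\<dots> = 0"
    using assms
    by (simp add: integral_inner_left_const integral_const_lmeasurable
                  integral_eq_measure_scaleR_ravg[of S f])
  finally show ?thesis .
qed

lemma integral_inner_diff_ravg_diff_ravg:
  fixes f g :: "pt \<Rightarrow> 'b::euclidean_space"
  assumes S: "S \<in> lmeasurable" and f: "f integrable_on S" and g: "g integrable_on S"
    and fg: "(\<lambda>x. f x \<bullet> g x) integrable_on S"
  shows "integral S (\<lambda>x. (f x - ravg S f) \<bullet> (g x - ravg S g))
       = integral S (\<lambda>x. f x \<bullet> g x) - measure lebesgue S * (ravg S f \<bullet> ravg S g)"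
proof -
  let ?mf = "ravg S f" and ?mg = "ravg S g"
  have split: "(f x - ?mf) \<bullet> (g x - ?mg) = (f x \<bullet> g x - ?mg \<bullet> f x) - ?mf \<bullet> (g x - ?mg)" for x
    by (simp add: inner_diff_left inner_diff_right inner_commute)
  have int_mg_f: "(\<lambda>x. ?mg \<bullet> f x) integrable_on S"
    and int_mf_g: "(\<lambda>x. ?mf \<bullet> (g x - ?mg)) integrable_on S"
    by (intro integrable_inner_left_const integrable_diff f g integrable_on_const S)+
  have "integral S (\<lambda>x. (f x - ?mf) \<bullet> (g x - ?mg))
      = integral S (\<lambda>x. f x \<bullet> g x) - integral S (\<lambda>x. ?mg \<bullet> f x)
        - integral S (\<lambda>x. ?mf \<bullet> (g x - ?mg))"
    unfolding split
    by (simp add: integral_diff integrable_diff fg int_mg_f int_mf_g)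
  also have "\<dots> = integral S (\<lambda>x. f x \<bullet> g x) - measure lebesgue S * (?mf \<bullet> ?mg)"
    using integral_inner_diff_ravg[OF S g]
    by (simp add: integral_inner_left_const[OF f] integral_eq_measure_scaleR_ravg[OF S, of f])
       (simp add: inner_commute)
  finally show ?thesis .
qed

lemma integrable_inner_of_square_integrable:
  fixes f g :: "'a::euclidean_space \<Rightarrow> 'b::euclidean_space"
  assumes S: "S \<in> sets lebesgue"
    and "f absolutely_integrable_on S" "g absolutely_integrable_on S"
    and "(\<lambda>x. (norm (f x))\<^sup>2) integrable_on S" "(\<lambda>x. (norm (g x))\<^sup>2) integrable_on S"
  shows "(\<lambda>x. f x \<bullet> g x) integrable_on S"
proof (rule measurable_bounded_by_integrable_imp_integrable[OF _ _ _ S])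
  show "(\<lambda>x. f x \<bullet> g x) \<in> borel_measurable (lebesgue_on S)"
    using assms by (intro borel_measurable_inner absolutely_integrable_imp_borel_measurable)
  show "(\<lambda>x. ((norm (f x))\<^sup>2 + (norm (g x))\<^sup>2) / 2) integrable_on S"
    using assms by (intro integrable_on_divide integrable_add)
  fix x
  have "norm (f x \<bullet> g x) \<le> norm (f x) * norm (g x)"
    using Cauchy_Schwarz_ineq2 by simp
  also have "\<dots> \<le> ((norm (f x))\<^sup>2 + (norm (g x))\<^sup>2) / 2"
    using sum_squares_bound[of "norm (f x)" "norm (g x)"] by (simp add: power2_eq_square)
  finally show "norm (f x \<bullet> g x) \<le> ((norm (f x))\<^sup>2 + (norm (g x))\<^sup>2) / 2" .
qed

lemma Wspace_differentiable:
  assumes "Wspace q n u" "x \<in> inside (pboundary q n)"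
  shows "u differentiable (at x)"
  using assms inside_pboundary_subset_interior unfolding Wspace_def by blast

lemma Wspace_grad_integrable:
  assumes "Wspace q n u"
  shows "grad u integrable_on pregion q n"
  using assms unfolding Wspace_def by (simp add: absolutely_integrable_on_def)

lemma Wspace_inner_grad_integrable:
  assumes "Wspace q n u" "Wspace q n v"
  shows "(\<lambda>x. grad u x \<bullet> grad v x) integrable_on pregion q n"
  using assms lmeasurable_pregion
  by (intro integrable_inner_of_square_integrable) (auto simp: Wspace_def fmeasurableD)

lemma grad_piC: "grad (piC q n v) x = ravg (pregion q n) (grad v)"
  unfolding piC_def by (rule grad_eqI) (auto intro!: derivative_eq_intros)

lemma grad_diff_piC:
  assumes "Wspace q n v" "x \<in> inside (pboundary q n)"
  shows "grad (\<lambda>y. v y - piC q n v y) x = grad v x - ravg (pregion q n) (grad v)"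
  using grad_diff_affine[OF Wspace_differentiable[OF assms], of _ "qbar q n" 0]
  by (simp add: piC_def)

lemma grad_diff_piP:
  assumes "Wspace q n v" "x \<in> inside (pboundary q n)"
  shows "grad (\<lambda>y. v y - piP q n v y) x = grad v x - ravg (pregion q n) (grad v)"
  using grad_diff_affine[OF Wspace_differentiable[OF assms], of _ "qbar q n" "vavg q n v"]
  by (simp add: piP_def piC_def piR_def)

lemma aE_WRspace_left:
  assumes "WRspace q n r"
  shows "aE \<gamma> (pregion q n) r v = 0"
proof -
  obtain k where "\<forall>x\<in>pregion q n. r x = k"
    using assms unfolding WRspace_def by blast
  then have "grad r x = 0" if "x \<in> inside (pboundary q n)" for x
    using grad_affine_on_open[OF open_inside_pboundary that, of r 0 k] by (auto simp: pregion_def)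
  then show ?thesis
    unfolding aE_def by (subst integral_pregion_cong[where g = "\<lambda>x. 0"]) auto
qed

lemma aE_WCspace_diff_piC:
  assumes "WCspace q n c" "Wspace q n v"
  shows "aE \<gamma> (pregion q n) c (\<lambda>x. v x - piC q n v x) = 0"
proof -
  obtain a b where "\<forall>x\<in>pregion q n. c x = a \<bullet> x + b"
    using assms(1) unfolding WCspace_def by blast
  then have "grad c x = a" if "x \<in> inside (pboundary q n)" for x
    using grad_affine_on_open[OF open_inside_pboundary that] by (auto simp: pregion_def)
  then have "integral (pregion q n) (\<lambda>x. grad c x \<bullet> grad (\<lambda>y. v y - piC q n v y) x)
      = integral (pregion q n) (\<lambda>x. a \<bullet> (grad v x - ravg (pregion q n) (grad v)))"
    using grad_diff_piC[OF assms(2)] by (intro integral_pregion_cong) simp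
  also have "\<dots> = 0"
    by (rule integral_inner_diff_ravg[OF lmeasurable_pregion Wspace_grad_integrable[OF assms(2)]])
  finally show ?thesis unfolding aE_def by simp
qed

lemma aE_piC_piC:
  "aE \<gamma> (pregion q n) (piC q n u) (piC q n v)
     = \<gamma> * measure lebesgue (pregion q n)
         * (ravg (pregion q n) (grad u) \<bullet> ravg (pregion q n) (grad v))"
  unfolding aE_def grad_piC integral_const_lmeasurable[OF lmeasurable_pregion] by simp

lemma aE_diff_piP_diff_piP:
  assumes "Wspace q n u" "Wspace q n v"
  shows "aE \<gamma> (pregion q n) (\<lambda>x. u x - piP q n u x) (\<lambda>x. v x - piP q n v x)
     = aE \<gamma> (pregion q n) u v
       - \<gamma> * measure lebesgue (pregion q n)
           * (ravg (pregion q n) (grad u) \<bullet> ravg (pregion q n) (grad v))"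
proof -
  let ?E = "pregion q n"
  have "integral ?E (\<lambda>x. grad (\<lambda>y. u y - piP q n u y) x \<bullet> grad (\<lambda>y. v y - piP q n v y) x)
      = integral ?E (\<lambda>x. (grad u x - ravg ?E (grad u)) \<bullet> (grad v x - ravg ?E (grad v)))"
    using grad_diff_piP[OF assms(1)] grad_diff_piP[OF assms(2)]
    by (intro integral_pregion_cong) simp
  also have "\<dots> = integral ?E (\<lambda>x. grad u x \<bullet> grad v x)
                  - measure lebesgue ?E * (ravg ?E (grad u) \<bullet> ravg ?E (grad v))"
    using assms lmeasurable_pregion
    by (intro integral_inner_diff_ravg_diff_ravg Wspace_grad_integrable Wspace_inner_grad_integrable)
  finally show ?thesis unfolding aE_def by (simp only: right_diff_distrib mult.assoc)
qed

theorem lemma5p1: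
  fixes q :: "nat \<Rightarrow> real ^ 2" and n :: nat and \<gamma> :: real
  assumes "is_polygon q n" and "\<gamma> > 0"
  defines "E \<equiv> pregion q n"
  shows "(\<forall>r c v. WRspace q n r \<longrightarrow> WCspace q n c \<longrightarrow> Wspace q n v \<longrightarrow>
            aE \<gamma> E r v = 0 \<and> aE \<gamma> E c (\<lambda>x. v x - piC q n v x) = 0)
       \<and> (\<forall>u v. Wspace q n u \<longrightarrow> Wspace q n v \<longrightarrow>
            aE \<gamma> E u v = aE \<gamma> E (piC q n u) (piC q n v)
              + aE \<gamma> E (\<lambda>x. u x - piP q n u x) (\<lambda>x. v x - piP q n v x))"
proof -
  have "aE \<gamma> E r v = 0 \<and> aE \<gamma> E c (\<lambda>x. v x - piC q n v x) = 0"
    if "WRspace q n r" "WCspace q n c" "Wspace q n v" for r c v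
    using that unfolding E_def by (simp add: aE_WRspace_left aE_WCspace_diff_piC)
  moreover have "aE \<gamma> E u v = aE \<gamma> E (piC q n u) (piC q n v)
      + aE \<gamma> E (\<lambda>x. u x - piP q n u x) (\<lambda>x. v x - piP q n v x)"
    if "Wspace q n u" "Wspace q n v" for u v
    unfolding E_def aE_piC_piC aE_diff_piP_diff_piP[OF that] by simp
  ultimately show ?thesis by blast
qed

end
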